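(* Let $r\ge 1$ be real and $n\ge1$ an integer. Then $$\frac{n}{n+1}\left(1+\frac{1}{n(n+2)}\right)^{1/r}\le \left(\frac{(n+1)\sum_{i=1}^{n} i^r}{n\sum_{i=1}^{n+1} i^r}\right)^{1/r}\le \frac{n}{n+1}\left(1+\frac{(n+1)^{r+1}-\sum_{i=1}^{n+1} i^r}{n^2\sum_{i=1}^{n+1} i^r}\right)^{1/r}.$$ If $0<r\le 1$, both inequalities hold with $\le$ replaced by $\ge$. *)

theory Defs
  imports Complex_Main
begin

definition S :: "nat \<Rightarrow> real \<Rightarrow> real" where
  "S n r = (\<Sum>i=1..n. real i powr r)"

end

theory Submission
  imports Defs "HOL-Analysis.Analysis"
begin

(* Both directions of the corollary are treated at once through a sign
   \<epsilon> \<in> {1, -1}: for r \<ge> 1 the function x \<mapsto> x^r is convex, for 0 < r \<le> 1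
   the function x \<mapsto> -x^r is convex, so in either case x \<mapsto> \<epsilon> x^r is convex on
   [0, \<infinity>) and every inequality is stated in the form \<epsilon> u \<le> \<epsilon> v.

   1. Convexity and homogeneity of \<epsilon> x^r give two "increment" inequalities
      comparing x ((x+1)^r - x^r) / x^r and x (x^r - (x-1)^r) / x^r at K \<le> L.
   2. A mediant argument over the telescoping sums of these increments shows
      that S m / (m (m+1)^r) is \<epsilon>-increasing and S m / ((m+1) m^r) is
      \<epsilon>-decreasing.
   3. Elementary algebra turns these two monotonicity statements into
      \<epsilon>-bounds for (n+1) S n / (n S (n+1)) against (n/(n+1))^r times explicit
      factors; taking r-th roots (monotone, so the sign survives) yields the
      corollary with \<epsilon> = 1 for r \<ge> 1 and \<epsilon> = -1 for 0 < r \<le> 1. *)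

text \<open>The signed power \<open>\<epsilon> x^r\<close> is convex on \<open>[0, \<infinity>)\<close> in both regimes: its second
  derivative \<open>\<epsilon> r (r-1) x^(r-2)\<close> is nonnegative for \<open>x > 0\<close>, and the endpoint 0 is
  handled by \<open>\<epsilon> t^r \<le> \<epsilon> t\<close> for \<open>0 < t < 1\<close>.\<close>
lemma signed_powr_convex:
  fixes r \<epsilon> :: real
  assumes "(1 \<le> r \<and> \<epsilon> = 1) \<or> (0 < r \<and> r \<le> 1 \<and> \<epsilon> = -1)"
  shows "convex_on {0..} (\<lambda>x. \<epsilon> * x powr r)"
proof -
  have r: "0 < r" and curv: "0 \<le> \<epsilon> * (r - 1)" using assms by auto
  have pos: "convex_on {0<..} (\<lambda>x. \<epsilon> * x powr r)"
  proof (rule f''_ge0_imp_convex)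
    fix x :: real assume "x \<in> {0<..}"
    then show "((\<lambda>x. \<epsilon> * x powr r) has_real_derivative \<epsilon> * (r * x powr (r - 1))) (at x)"
      and "((\<lambda>x. \<epsilon> * (r * x powr (r - 1))) has_real_derivative \<epsilon> * (r * ((r - 1) * x powr (r - 1 - 1)))) (at x)"
      by (auto intro!: derivative_eq_intros)
    have "\<epsilon> * (r * ((r - 1) * x powr (r - 1 - 1))) = r * (\<epsilon> * (r - 1)) * x powr (r - 1 - 1)"
      by (simp add: algebra_simps)
    then show "0 \<le> \<epsilon> * (r * ((r - 1) * x powr (r - 1 - 1)))"
      using curv r by (metis mult_nonneg_nonneg less_eq_real_def powr_ge_zero)
  qed (simp add: convex_real_interval)
  have edge: "\<epsilon> * t powr r \<le> \<epsilon> * t" if "0 < t" "t < 1" for t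
    using assms that powr_mono'[of 1 r t] powr_mono'[of r 1 t] by auto
  show ?thesis
  proof (rule convex_on_linorderI)
    fix t x y :: real
    assume t: "0 < t" "t < 1" and xy: "x \<in> {0..}" "y \<in> {0..}" "x < y"
    show "\<epsilon> * ((1 - t) *\<^sub>R x + t *\<^sub>R y) powr r \<le> (1 - t) * (\<epsilon> * x powr r) + t * (\<epsilon> * y powr r)"
    proof (cases "x = 0")
      case True
      have "\<epsilon> * t powr r * y powr r \<le> \<epsilon> * t * y powr r"
        using edge[OF t] by (intro mult_right_mono) auto
      then show ?thesis using True t xy r by (simp add: powr_mult mult.assoc mult.left_commute)
    next
      case False
      then show ?thesis using convex_onD[OF pos, of t x y] t xy by auto
    qed
  qed (simp add: convex_real_interval)
qed

lemma convex_on_three_point: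
  fixes f :: "real \<Rightarrow> real"
  assumes f: "convex_on {a..b} f" and c: "a \<le> c" "c \<le> b"
  shows "(b - a) * f c \<le> (b - c) * f a + (c - a) * f b"
proof (cases "a = b")
  case True
  then show ?thesis using c by simp
next
  case False
  then have ab: "0 < b - a" using c by simp
  have "f c \<le> (f b - f a) / (b - a) * (c - a) + f a"
    using convex_onD_Icc'[OF f] c by simp
  then have "(b - a) * f c \<le> (b - a) * ((f b - f a) / (b - a) * (c - a) + f a)"
    using ab by (simp add: mult_left_mono)
  also have "\<dots> = (b - c) * f a + (c - a) * f b"
    using ab by (simp add: field_simps)
  finally show ?thesis .
qed

lemma signed_powr_three_point:
  fixes \<epsilon> r a b c :: real
  assumes f: "convex_on {0..} (\<lambda>x. \<epsilon> * x powr r)" and "0 \<le> a" "a \<le> c" "c \<le> b"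
  shows "(b - a) * (\<epsilon> * c powr r) \<le> (b - c) * (\<epsilon> * a powr r) + (c - a) * (\<epsilon> * b powr r)"
  using assms
  by (intro convex_on_three_point[of a b]) (auto intro: convex_on_subset[OF f] simp: convex_real_interval)

text \<open>Forward increments: \<open>x \<mapsto> x ((x+1)^r - x^r) / x^r\<close> is \<open>\<epsilon>\<close>-antitone on \<open>(0, \<infinity>)\<close>.
  This is the chord inequality at the points \<open>KL \<le> K(L+1) \<le> L(K+1)\<close>, split by
  multiplicativity of \<open>x^r\<close>.\<close>
lemma forward_increment_antimono:
  fixes \<epsilon> r K L :: real
  assumes f: "convex_on {0..} (\<lambda>x. \<epsilon> * x powr r)" and KL: "0 < K" "K \<le> L"
  shows "\<epsilon> * (K powr r * L * ((L + 1) powr r - L powr r))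
           \<le> \<epsilon> * (L powr r * K * ((K + 1) powr r - K powr r))"
proof -
  have "(L * (K + 1) - K * L) * (\<epsilon> * (K * (L + 1)) powr r)
      \<le> (L * (K + 1) - K * (L + 1)) * (\<epsilon> * (K * L) powr r)
        + (K * (L + 1) - K * L) * (\<epsilon> * (L * (K + 1)) powr r)"
    by (rule signed_powr_three_point[OF f]) (use KL in \<open>auto simp: algebra_simps\<close>)
  moreover have "(K * (L + 1)) powr r = K powr r * (L + 1) powr r"
    "(K * L) powr r = K powr r * L powr r" "(L * (K + 1)) powr r = L powr r * (K + 1) powr r"
    using KL by (simp_all add: powr_mult)
  ultimately show ?thesis by (simp add: algebra_simps)
qed

text \<open>Backward increments: \<open>x \<mapsto> x (x^r - (x-1)^r) / x^r\<close> is \<open>\<epsilon>\<close>-monotone on \<open>[1, \<infinity>)\<close>,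
  from the chord inequality at the points \<open>L(K-1) \<le> K(L-1) \<le> KL\<close>.\<close>
lemma backward_increment_mono:
  fixes \<epsilon> r K L :: real
  assumes f: "convex_on {0..} (\<lambda>x. \<epsilon> * x powr r)" and KL: "1 \<le> K" "K \<le> L"
  shows "\<epsilon> * (L powr r * K * (K powr r - (K - 1) powr r))
           \<le> \<epsilon> * (K powr r * L * (L powr r - (L - 1) powr r))"
proof -
  have "(K * L - L * (K - 1)) * (\<epsilon> * (K * (L - 1)) powr r)
      \<le> (K * L - K * (L - 1)) * (\<epsilon> * (L * (K - 1)) powr r)
        + (K * (L - 1) - L * (K - 1)) * (\<epsilon> * (K * L) powr r)"
    by (rule signed_powr_three_point[OF f]) (use KL in \<open>auto simp: algebra_simps\<close>)
  moreover have "(K * (L - 1)) powr r = K powr r * (L - 1) powr r"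
    "(K * L) powr r = K powr r * L powr r" "(L * (K - 1)) powr r = L powr r * (K - 1) powr r"
    using KL by (simp_all add: powr_mult)
  ultimately show ?thesis by (simp add: algebra_simps)
qed

text \<open>Mediant inequality, stated without division: if \<open>a k / b k\<close> is largest at \<open>k = m+1\<close>
  among \<open>1..m+1\<close> (in cross-multiplied form), then appending the last term does not
  decrease \<open>\<Sum> a / \<Sum> b\<close>.\<close>
lemma sum_ratio_mediant:
  fixes a b :: "nat \<Rightarrow> real"
  assumes "\<And>k. k \<in> {1..m} \<Longrightarrow> a k * b (Suc m) \<le> a (Suc m) * b k"
  shows "(\<Sum>k=1..m. a k) * (\<Sum>k=1..Suc m. b k) \<le> (\<Sum>k=1..Suc m. a k) * (\<Sum>k=1..m. b k)"
proof -
  have "(\<Sum>k=1..m. a k) * b (Suc m) = (\<Sum>k=1..m. a k * b (Suc m))"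
    by (simp add: sum_distrib_right)
  also have "\<dots> \<le> (\<Sum>k=1..m. a (Suc m) * b k)"
    using assms by (rule sum_mono)
  also have "\<dots> = a (Suc m) * (\<Sum>k=1..m. b k)"
    by (simp add: sum_distrib_left)
  finally show ?thesis by (simp add: algebra_simps)
qed

lemma S_Suc: "S (Suc m) r = S m r + real (Suc m) powr r"
  by (simp add: S_def)

lemma S_pos: "1 \<le> n \<Longrightarrow> 0 < S n r"
  unfolding S_def by (intro sum_pos) auto

lemma sum_forward_telescope:
  "(\<Sum>k=1..m. real k * real (k + 1) powr r - (real k - 1) * real k powr r) = real m * real (m + 1) powr r"
  by (induction m) (auto simp: algebra_simps)

lemma sum_backward_telescope:
  "(\<Sum>k=1..m. real (k + 1) * real k powr r - real k * (real k - 1) powr r) = real (m + 1) * real m powr r"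
  by (induction m) (auto simp: algebra_simps)

text \<open>\<open>S m / (m (m+1)^r)\<close> is \<open>\<epsilon>\<close>-increasing: the ratio of \<open>k^r\<close> to the forward telescoping
  term is \<open>\<epsilon>\<close>-largest at the last index by \<open>forward_increment_antimono\<close>.\<close>
lemma S_over_forward_mono:
  fixes \<epsilon> r :: real
  assumes f: "convex_on {0..} (\<lambda>x. \<epsilon> * x powr r)"
  shows "\<epsilon> * (S m r * (real (m + 1) * real (m + 2) powr r))
           \<le> \<epsilon> * (S (m + 1) r * (real m * real (m + 1) powr r))"
proof -
  define b where "b k = \<epsilon> * (real k * real (k + 1) powr r - (real k - 1) * real k powr r)" for k
  have b_sum: "(\<Sum>k=1..j. b k) = \<epsilon> * (real j * real (j + 1) powr r)" for j
    unfolding b_def by (simp only: sum_distrib_left[symmetric] sum_forward_telescope)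
  have "real k powr r * b (Suc m) \<le> real (Suc m) powr r * b k" if "k \<in> {1..m}" for k
  proof -
    have "0 < real k" "real k \<le> real (Suc m)" using that by auto
    from forward_increment_antimono[OF f this] show ?thesis
      by (simp add: b_def algebra_simps)
  qed
  then have "(\<Sum>k=1..m. real k powr r) * (\<Sum>k=1..Suc m. b k)
      \<le> (\<Sum>k=1..Suc m. real k powr r) * (\<Sum>k=1..m. b k)"
    by (rule sum_ratio_mediant)
  then show ?thesis unfolding b_sum S_def[symmetric] by (simp add: algebra_simps)
qed

text \<open>\<open>S m / ((m+1) m^r)\<close> is \<open>\<epsilon>\<close>-decreasing, by the same argument with backward increments.\<close>
lemma S_over_backward_antimono:
  fixes \<epsilon> r :: real
  assumes f: "convex_on {0..} (\<lambda>x. \<epsilon> * x powr r)"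
  shows "\<epsilon> * (S (m + 1) r * (real (m + 1) * real m powr r))
           \<le> \<epsilon> * (S m r * (real (m + 2) * real (m + 1) powr r))"
proof -
  define b where "b k = \<epsilon> * (real (k + 1) * real k powr r - real k * (real k - 1) powr r)" for k
  have b_sum: "(\<Sum>k=1..j. b k) = \<epsilon> * (real (j + 1) * real j powr r)" for j
    unfolding b_def by (simp only: sum_distrib_left[symmetric] sum_backward_telescope)
  have "b k * real (Suc m) powr r \<le> b (Suc m) * real k powr r" if "k \<in> {1..m}" for k
  proof -
    have "1 \<le> real k" "real k \<le> real (Suc m)" using that by auto
    from backward_increment_mono[OF f this] show ?thesis
      by (simp add: b_def algebra_simps)
  qed
  then have "(\<Sum>k=1..m. b k) * (\<Sum>k=1..Suc m. real k powr r)
      \<le> (\<Sum>k=1..Suc m. b k) * (\<Sum>k=1..m. real k powr r)"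
    by (rule sum_ratio_mediant)
  then show ?thesis unfolding b_sum S_def[symmetric] by (simp add: algebra_simps)
qed

lemma signed_diff_nonneg:
  fixes \<epsilon> c x y u v :: real
  assumes "0 \<le> c" "\<epsilon> * x \<le> \<epsilon> * y" "u - v = c * (y - x)"
  shows "\<epsilon> * v \<le> \<epsilon> * u"
proof -
  have "\<epsilon> * u - \<epsilon> * v = \<epsilon> * (u - v)" by (simp add: right_diff_distrib)
  also have "\<dots> = c * (\<epsilon> * y - \<epsilon> * x)" unfolding assms(3) by (simp add: algebra_simps)
  finally show ?thesis using assms(1,2) by (metis diff_ge_0_iff_ge mult_nonneg_nonneg)
qed

text \<open>With \<open>A = S n\<close>, \<open>B = S (n+1)\<close>, \<open>p = n^r\<close>, \<open>q = (n+1)^r\<close>: the \<open>\<epsilon>\<close>-decrease of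
  \<open>S / ((m+1) m^r)\<close> from \<open>n\<close> to \<open>n+1\<close> is the lower bound on \<open>(n+1) A / (n B)\<close>.\<close>
lemma lower_ratio_bound:
  fixes \<epsilon> N p q A B :: real
  assumes "0 < N" "0 < q" "0 < B" "\<epsilon> * (B * ((N + 1) * p)) \<le> \<epsilon> * (A * ((N + 2) * q))"
  shows "\<epsilon> * (p / q * (1 + 1 / (N * (N + 2)))) \<le> \<epsilon> * ((N + 1) * A / (N * B))"
proof (rule signed_diff_nonneg)
  show "0 \<le> (N + 1) / (N * B * q * (N + 2))" using assms by simp
  show "(N + 1) * A / (N * B) - p / q * (1 + 1 / (N * (N + 2)))
      = (N + 1) / (N * B * q * (N + 2)) * (A * ((N + 2) * q) - B * ((N + 1) * p))"
  proof -
    have "N \<noteq> 0" "N + 2 \<noteq> 0" "q \<noteq> 0" "B \<noteq> 0" using assms by auto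
    then show ?thesis by (simp add: divide_simps) (simp add: algebra_simps)
  qed
qed (fact assms)

text \<open>Likewise, with \<open>A' = S (n-1)\<close>, the \<open>\<epsilon>\<close>-increase of \<open>S / (m (m+1)^r)\<close> from \<open>n-1\<close>
  to \<open>n\<close> is the upper bound.\<close>
lemma upper_ratio_bound:
  fixes \<epsilon> N p q A' A B :: real
  assumes "0 < N" "0 < q" "0 < B" "A = A' + p" "B = A + q"
    and "\<epsilon> * (A' * (N * q)) \<le> \<epsilon> * (A * ((N - 1) * p))"
  shows "\<epsilon> * ((N + 1) * A / (N * B)) \<le> \<epsilon> * (p / q * (1 + ((N + 1) * q - B) / (N\<^sup>2 * B)))"
proof (rule signed_diff_nonneg)
  show "0 \<le> (N + 1) / (q * N\<^sup>2 * B)" using assms by simp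
  show "p / q * (1 + ((N + 1) * q - B) / (N\<^sup>2 * B)) - (N + 1) * A / (N * B)
      = (N + 1) / (q * N\<^sup>2 * B) * (A * ((N - 1) * p) - A' * (N * q))"
  proof -
    have "N \<noteq> 0" "q \<noteq> 0" "B \<noteq> 0" using assms by auto
    then show ?thesis unfolding assms(5) assms(4)
      by (simp add: divide_simps) (simp add: algebra_simps power2_eq_square)
  qed
qed (fact assms)

lemma S_quotient_signed_bounds:
  fixes \<epsilon> r :: real and n :: nat
  assumes n: "n \<ge> 1" and f: "convex_on {0..} (\<lambda>x. \<epsilon> * x powr r)"
  defines "s \<equiv> real n / real (n+1)" and "X \<equiv> real (n+1) * S n r / (real n * S (n+1) r)"
  shows "\<epsilon> * (s powr r * (1 + 1 / (real n * real (n+2)))) \<le> \<epsilon> * X"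
    and "\<epsilon> * X \<le> \<epsilon> * (s powr r *
           (1 + (real (n+1) powr (r+1) - S (n+1) r) / ((real n)^2 * S (n+1) r)))"
proof -
  obtain m where m: "n = Suc m" using n by (cases n) auto
  define N where "N = real n"
  define p where "p = N powr r"
  define q where "q = (N + 1) powr r"
  define A' where "A' = S m r"
  define A where "A = S n r"
  define B where "B = S (n + 1) r"
  have N: "1 \<le> N" using n by (simp add: N_def)
  have pq: "0 < p" "0 < q" using N by (simp_all add: p_def q_def)
  have A_eq: "A = A' + p" by (simp add: A_def A'_def p_def N_def m S_Suc)
  have B_eq: "B = A + q" by (simp add: B_def A_def q_def N_def S_Suc add.commute)
  have B: "0 < B" using S_pos n by (simp add: B_def)
  have translate: "s powr r = p / q" "X = (N + 1) * A / (N * B)" "real n * real (n+2) = N * (N + 2)"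
    "(real (n+1) powr (r+1) - S (n+1) r) / ((real n)^2 * S (n+1) r) = ((N + 1) * q - B) / (N\<^sup>2 * B)"
    using N by (simp_all add: s_def X_def N_def A_def B_def p_def q_def powr_divide powr_add add.commute)
  show "\<epsilon> * (s powr r * (1 + 1 / (real n * real (n+2)))) \<le> \<epsilon> * X"
    unfolding translate
  proof (rule lower_ratio_bound)
    show "\<epsilon> * (B * ((N + 1) * p)) \<le> \<epsilon> * (A * ((N + 2) * q))"
      using S_over_backward_antimono[OF f, of n] by (simp add: A_def B_def N_def p_def q_def algebra_simps)
  qed (use N pq B in auto)
  show "\<epsilon> * X \<le> \<epsilon> * (s powr r *
           (1 + (real (n+1) powr (r+1) - S (n+1) r) / ((real n)^2 * S (n+1) r)))"
    unfolding translate
  proof (rule upper_ratio_bound[OF _ _ _ A_eq B_eq])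
    show "\<epsilon> * (A' * (N * q)) \<le> \<epsilon> * (A * ((N - 1) * p))"
      using S_over_forward_mono[OF f, of m] by (simp add: A_def A'_def N_def p_def q_def m algebra_simps)
  qed (use N pq B in auto)
qed

lemma signed_root_scaled:
  fixes \<epsilon> r s c x :: real
  assumes r: "0 < r" and \<epsilon>: "\<epsilon> = 1 \<or> \<epsilon> = -1" and nonneg: "0 \<le> s" "0 \<le> c" "0 \<le> x"
  shows "\<epsilon> * (s powr r * c) \<le> \<epsilon> * x \<Longrightarrow> \<epsilon> * (s * c powr (1/r)) \<le> \<epsilon> * x powr (1/r)"
    and "\<epsilon> * x \<le> \<epsilon> * (s powr r * c) \<Longrightarrow> \<epsilon> * x powr (1/r) \<le> \<epsilon> * (s * c powr (1/r))"
proof -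
  have root: "(s powr r * c) powr (1/r) = s * c powr (1/r)"
    using r nonneg by (simp add: powr_mult powr_powr)
  have mono: "\<epsilon> * y powr (1/r) \<le> \<epsilon> * z powr (1/r)" if "0 \<le> y" "0 \<le> z" "\<epsilon> * y \<le> \<epsilon> * z" for y z
    using \<epsilon> r that by (auto intro!: powr_mono2)
  have "0 \<le> s powr r * c" using nonneg by simp
  then show "\<epsilon> * (s powr r * c) \<le> \<epsilon> * x \<Longrightarrow> \<epsilon> * (s * c powr (1/r)) \<le> \<epsilon> * x powr (1/r)"
    and "\<epsilon> * x \<le> \<epsilon> * (s powr r * c) \<Longrightarrow> \<epsilon> * x powr (1/r) \<le> \<epsilon> * (s * c powr (1/r))"
    using mono[of "s powr r * c" x] mono[of x "s powr r * c"] nonneg by (simp_all only: root)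
qed

lemma signed_ratio_bounds:
  fixes \<epsilon> r :: real and n :: nat
  assumes n: "n \<ge> 1" and r: "0 < r" and \<epsilon>: "\<epsilon> = 1 \<or> \<epsilon> = -1"
    and f: "convex_on {0..} (\<lambda>x. \<epsilon> * x powr r)"
  defines "s \<equiv> real n / real (n+1)" and "X \<equiv> real (n+1) * S n r / (real n * S (n+1) r)"
    and "c \<equiv> 1 + (real (n+1) powr (r+1) - S (n+1) r) / ((real n)^2 * S (n+1) r)"
  shows "\<epsilon> * (s * (1 + 1 / (real n * real (n+2))) powr (1/r)) \<le> \<epsilon> * X powr (1/r)"
    and "\<epsilon> * X powr (1/r) \<le> \<epsilon> * (s * c powr (1/r))"
proof -
  have Sn: "0 < S n r" "0 < S (n+1) r" using S_pos n by auto
  have s: "0 \<le> s" and X: "0 \<le> X" using n Sn by (simp_all add: s_def X_def)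
  have "S (n+1) r \<le> (real n)^2 * S (n+1) r" using n Sn by (simp add: one_le_power)
  moreover have "0 < real (n+1) powr (r+1)" by simp
  ultimately have "- ((real n)^2 * S (n+1) r) \<le> real (n+1) powr (r+1) - S (n+1) r" by linarith
  then have c: "0 \<le> c" using n Sn by (simp add: c_def field_simps)
  show "\<epsilon> * (s * (1 + 1 / (real n * real (n+2))) powr (1/r)) \<le> \<epsilon> * X powr (1/r)"
    using signed_root_scaled(1)[OF r \<epsilon> s _ X] S_quotient_signed_bounds(1)[OF n f] by (simp add: s_def X_def)
  show "\<epsilon> * X powr (1/r) \<le> \<epsilon> * (s * c powr (1/r))"
    using signed_root_scaled(2)[OF r \<epsilon> s c X] S_quotient_signed_bounds(2)[OF n f] by (simp add: s_def X_def c_def)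
qed

theorem corollary2p3:
  fixes r :: real and n :: nat
  assumes "n \<ge> 1"
  shows "(r \<ge> 1 \<longrightarrow>
           real n / real (n+1) * (1 + 1 / (real n * real (n+2))) powr (1/r)
             \<le> ((real (n+1) * S n r) / (real n * S (n+1) r)) powr (1/r)
         \<and> ((real (n+1) * S n r) / (real n * S (n+1) r)) powr (1/r)
             \<le> real n / real (n+1) *
               (1 + (real (n+1) powr (r+1) - S (n+1) r) / ((real n)^2 * S (n+1) r)) powr (1/r))
       \<and> (0 < r \<and> r \<le> 1 \<longrightarrow>
           real n / real (n+1) * (1 + 1 / (real n * real (n+2))) powr (1/r)
             \<ge> ((real (n+1) * S n r) / (real n * S (n+1) r)) powr (1/r)
         \<and> ((real (n+1) * S n r) / (real n * S (n+1) r)) powr (1/r)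
             \<ge> real n / real (n+1) *
               (1 + (real (n+1) powr (r+1) - S (n+1) r) / ((real n)^2 * S (n+1) r)) powr (1/r))"
proof -
  have convex: "convex_on {0..} (\<lambda>x. \<epsilon> * x powr r)"
    if "(1 \<le> r \<and> \<epsilon> = 1) \<or> (0 < r \<and> r \<le> 1 \<and> \<epsilon> = -1)" for \<epsilon>
    using that by (rule signed_powr_convex)
  show ?thesis
    using signed_ratio_bounds[OF assms _ _ convex, of 1] signed_ratio_bounds[OF assms _ _ convex, of "-1"]
    by auto
qed

end
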